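(* Let $\mathcal X$ and $\mathcal Y$ be measurable spaces. Let $\mathcal M_X$ be an exponential family on $\mathcal X$ with sufficient statistic $\mathbf s_X:\mathcal X\to\mathbb R^{d_X}$, base measure $\nu_X$ and log-partition function $\psi_X(\boldsymbol\theta)=\log\int_{\mathcal X} e^{\mathbf s_X(x)\cdot\boldsymbol\theta}\,\nu_X(dx)$, and let $\mathcal M_Y$ be an exponential family on $\mathcal Y$ with sufficient statistic $\mathbf s_Y:\mathcal Y\to\mathbb R^{d_Y}$, base measure $\nu_Y$ and log-partition function $\psi_Y$. Let $p(x,y)$ be a harmonium with natural parameters $(\boldsymbol\theta_X,\boldsymbol\theta_Y,\boldsymbol\Theta_{XY})$, where $\boldsymbol\theta_X\in\mathbb R^{d_X}$, $\boldsymbol\theta_Y\in\mathbb R^{d_Y}$, $\boldsymbol\Theta_{XY}\in\mathbb R^{d_X\times d_Y}$, i.e. $$p(x,y)=e^{\mathbf s_X(x)\cdot\boldsymbol\theta_X+\mathbf s_Y(y)\cdot\boldsymbol\theta_Y+\mathbf s_X(x)\cdot\boldsymbol\Theta_{XY}\cdot\mathbf s_Y(y)-\psi_{XY}(\boldsymbol\theta_X,\boldsymbol\theta_Y,\boldsymbol\Theta_{XY})}\nu_X(x)\nu_Y(y),$$ with $\psi_{XY}$ the (finite) normalizing log-partition function, and let $p(y)=\int_{\mathcal X}p(x,y)\,dx$ denote its prior (marginal on $\mathcal Y$). Then the following are equivalent: (i) there exists $\boldsymbol\theta^*_Y$ such that $p(y)\propto \nu_Y(y)\,e^{\mathbf s_Y(y)\cdot\boldsymbol\theta^*_Y}$;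 (ii) there exist a vector $\boldsymbol\rho_Y\in\mathbb R^{d_Y}$ and a constant $\rho_0\in\mathbb R$ such that for all $y\in\mathcal Y$, $$\psi_X(\boldsymbol\theta_X+\boldsymbol\Theta_{XY}\cdot\mathbf s_Y(y))=\mathbf s_Y(y)\cdot\boldsymbol\rho_Y+\rho_0 .$$ Moreover, in this case the prior parameters are $\boldsymbol\theta^*_Y=\boldsymbol\theta_Y+\boldsymbol\rho_Y$.
   Context: An exponential family with sufficient statistic $\mathbf s$ and base measure $\nu$ consists of densities $p(x;\boldsymbol\theta)=e^{\mathbf s(x)\cdot\boldsymbol\theta-\psi(\boldsymbol\theta)}\nu(x)$ with natural parameters $\boldsymbol\theta$ and log-partition function $\psi$. A harmonium built from two exponential families is the exponential family on $\mathcal X\times\mathcal Y$ with base measure $\nu_X(x)\nu_Y(y)$ and sufficient statistic $(\mathbf s_X(x),\mathbf s_Y(y),\mathbf s_X(x)\otimes\mathbf s_Y(y))$, as written in the claim. A harmonium satisfying condition (ii) is called conjugated, and $\boldsymbol\rho_Y,\rho_0$ are called its conjugation parameters. *)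

theory Defs
  imports "HOL-Analysis.Analysis"
begin

definition log_partition :: "'a measure \<Rightarrow> ('a \<Rightarrow> 'v::real_inner) \<Rightarrow> 'v \<Rightarrow> ereal" where
  "log_partition \<nu> s \<theta> =
     (let I = (\<integral>\<^sup>+ x. ennreal (exp (s x \<bullet> \<theta>)) \<partial>\<nu>) in
      if I = \<infinity> then \<infinity> else if I = 0 then -\<infinity> else ereal (ln (enn2real I)))"

definition harm_exponent ::
  "('x \<Rightarrow> real^'dx) \<Rightarrow> ('y \<Rightarrow> real^'dy) \<Rightarrow> real^'dx \<Rightarrow> real^'dy \<Rightarrow> real^'dy^'dx \<Rightarrow> 'x \<Rightarrow> 'y \<Rightarrow> real"
  where
  "harm_exponent sX sY \<theta>X \<theta>Y \<Theta> x y = sX x \<bullet> \<theta>X + sY y \<bullet> \<theta>Y + sX x \<bullet> (\<Theta> *v sY y)"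

definition harm_log_partition ::
  "'x measure \<Rightarrow> 'y measure \<Rightarrow> ('x \<Rightarrow> real^'dx) \<Rightarrow> ('y \<Rightarrow> real^'dy)
     \<Rightarrow> real^'dx \<Rightarrow> real^'dy \<Rightarrow> real^'dy^'dx \<Rightarrow> ereal" where
  "harm_log_partition \<nu>X \<nu>Y sX sY \<theta>X \<theta>Y \<Theta> =
     (let I = (\<integral>\<^sup>+ xy. ennreal (exp (harm_exponent sX sY \<theta>X \<theta>Y \<Theta> (fst xy) (snd xy))) \<partial>(\<nu>X \<Otimes>\<^sub>M \<nu>Y)) in
      if I = \<infinity> then \<infinity> else if I = 0 then -\<infinity> else ereal (ln (enn2real I)))"

text \<open>Prior (marginal on \<open>Y\<close>) of the harmonium, as a density w.r.t. the base measure \<open>\<nu>Y\<close>,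
  defined pointwise by \<open>p(y) = \<integral> p(x,y) \<nu>X(dx)\<close>; \<open>\<psi>\<close> is the (real) value of \<open>\<psi>XY\<close>.\<close>
definition harm_prior ::
  "'x measure \<Rightarrow> ('x \<Rightarrow> real^'dx) \<Rightarrow> ('y \<Rightarrow> real^'dy)
     \<Rightarrow> real^'dx \<Rightarrow> real^'dy \<Rightarrow> real^'dy^'dx \<Rightarrow> real \<Rightarrow> 'y \<Rightarrow> ennreal" where
  "harm_prior \<nu>X sX sY \<theta>X \<theta>Y \<Theta> \<psi> y =
     (\<integral>\<^sup>+ x. ennreal (exp (harm_exponent sX sY \<theta>X \<theta>Y \<Theta> x y - \<psi>)) \<partial>\<nu>X)"

end

theory Submission
  imports Defs
begin

text \<open>Integrating out \<open>x\<close> turns the harmonium density at \<open>y\<close> into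
  \<open>exp(sY(y)\<bullet>\<theta>Y - \<psi>XY) \<cdot> exp(\<psi>X(\<theta>X + \<Theta>XY sY(y)))\<close>, because the interaction term
  \<open>sX(x)\<bullet>\<Theta>XY sY(y)\<close> merely shifts the natural parameter of \<open>\<M>X\<close>. Hence the prior is
  \<open>c \<cdot> exp(sY(y)\<bullet>\<theta>*)\<close> at \<open>y\<close> exactly when
  \<open>\<psi>X(\<theta>X + \<Theta>XY sY(y)) = sY(y)\<bullet>(\<theta>* - \<theta>Y) + ln c + \<psi>XY\<close>, and both directions of the
  equivalence, together with \<open>\<theta>* = \<theta>Y + \<rho>Y\<close>, are read off this pointwise identity.
  Since \<open>\<psi>XY\<close> only enters as a constant factor, the hypotheses on \<open>sY\<close> and on
  \<open>\<psi>XY\<close> being the harmonium's log-partition value are not needed.\<close>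

lemma log_partition_eq_ereal_iff:
  "log_partition \<nu> s \<theta> = ereal r \<longleftrightarrow> (\<integral>\<^sup>+ x. ennreal (exp (s x \<bullet> \<theta>)) \<partial>\<nu>) = ennreal (exp r)"
proof -
  have "(if I = \<infinity> then \<infinity> else if I = 0 then -\<infinity> else ereal (ln (enn2real I))) = ereal r
      \<longleftrightarrow> I = ennreal (exp r)" for I :: ennreal
  proof
    assume "(if I = \<infinity> then \<infinity> else if I = 0 then -\<infinity> else ereal (ln (enn2real I))) = ereal r"
    then have finite: "I \<noteq> \<infinity>" and "I \<noteq> 0" and ln_I: "ln (enn2real I) = r"
      by (auto split: if_splits)
    then have "enn2real I > 0"
      by (simp add: enn2real_positive_iff top.not_eq_extremum zero_less_iff_neq_zero)
    then have "enn2real I = exp r"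
      unfolding ln_I[symmetric] by simp
    moreover have "I = ennreal (enn2real I)"
      using finite by (simp add: top.not_eq_extremum)
    ultimately show "I = ennreal (exp r)" by simp
  qed simp
  then show ?thesis
    unfolding log_partition_def Let_def .
qed

lemma harm_prior_eq_log_partition:
  fixes sX :: "'x \<Rightarrow> real^'dx::finite" and sY :: "'y \<Rightarrow> real^'dy::finite"
  assumes "sX \<in> borel_measurable \<nu>X"
  shows "harm_prior \<nu>X sX sY \<theta>X \<theta>Y \<Theta> \<psi> y =
    ennreal (exp (sY y \<bullet> \<theta>Y - \<psi>)) * (\<integral>\<^sup>+ x. ennreal (exp (sX x \<bullet> (\<theta>X + \<Theta> *v sY y))) \<partial>\<nu>X)"
proof -
  have "exp (harm_exponent sX sY \<theta>X \<theta>Y \<Theta> x y - \<psi>) =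
      exp (sY y \<bullet> \<theta>Y - \<psi>) * exp (sX x \<bullet> (\<theta>X + \<Theta> *v sY y))" for x
    by (simp add: harm_exponent_def inner_add_right flip: exp_add)
  then have "harm_prior \<nu>X sX sY \<theta>X \<theta>Y \<Theta> \<psi> y =
      (\<integral>\<^sup>+ x. ennreal (exp (sY y \<bullet> \<theta>Y - \<psi>)) * ennreal (exp (sX x \<bullet> (\<theta>X + \<Theta> *v sY y))) \<partial>\<nu>X)"
    unfolding harm_prior_def by (simp add: ennreal_mult)
  also have "\<dots> = ennreal (exp (sY y \<bullet> \<theta>Y - \<psi>)) *
      (\<integral>\<^sup>+ x. ennreal (exp (sX x \<bullet> (\<theta>X + \<Theta> *v sY y))) \<partial>\<nu>X)"
    by (rule nn_integral_cmult) (use assms in measurable)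
  finally show ?thesis .
qed

lemma harm_prior_eq_exp_family_iff:
  fixes sX :: "'x \<Rightarrow> real^'dx::finite" and sY :: "'y \<Rightarrow> real^'dy::finite"
  assumes "sX \<in> borel_measurable \<nu>X" and "c > 0"
  shows "harm_prior \<nu>X sX sY \<theta>X \<theta>Y \<Theta> \<psi> y = ennreal (c * exp (sY y \<bullet> \<theta>s)) \<longleftrightarrow>
    log_partition \<nu>X sX (\<theta>X + \<Theta> *v sY y) = ereal (sY y \<bullet> (\<theta>s - \<theta>Y) + (ln c + \<psi>))"
proof -
  define E where "E = exp (sY y \<bullet> \<theta>Y - \<psi>)"
  have "c * exp (sY y \<bullet> \<theta>s) = E * exp (sY y \<bullet> (\<theta>s - \<theta>Y) + (ln c + \<psi>))"
    using \<open>c > 0\<close> by (simp add: E_def exp_add exp_diff inner_diff_right)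
  then have "ennreal (c * exp (sY y \<bullet> \<theta>s)) =
      ennreal E * ennreal (exp (sY y \<bullet> (\<theta>s - \<theta>Y) + (ln c + \<psi>)))"
    by (simp add: E_def ennreal_mult)
  moreover have "ennreal E \<noteq> 0" and "ennreal E \<noteq> \<infinity>"
    by (simp_all add: E_def)
  ultimately show ?thesis
    unfolding harm_prior_eq_log_partition[OF assms(1)] log_partition_eq_ereal_iff
    by (simp add: E_def ennreal_mult_cancel_left)
qed

theorem lemma1:
  fixes \<nu>X :: "'x measure" and \<nu>Y :: "'y measure"
    and sX :: "'x \<Rightarrow> real^'dx::finite" and sY :: "'y \<Rightarrow> real^'dy::finite"
    and \<theta>X :: "real^'dx" and \<theta>Y :: "real^'dy" and \<Theta>XY :: "real^'dy^'dx"
    and \<psi>XY :: real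
  assumes "sX \<in> borel_measurable \<nu>X"
    and "sY \<in> borel_measurable \<nu>Y"
    and "harm_log_partition \<nu>X \<nu>Y sX sY \<theta>X \<theta>Y \<Theta>XY = ereal \<psi>XY"
  shows
    "((\<exists>\<theta>s :: real^'dy. \<exists>c > 0. \<forall>y \<in> space \<nu>Y.
         harm_prior \<nu>X sX sY \<theta>X \<theta>Y \<Theta>XY \<psi>XY y = ennreal (c * exp (sY y \<bullet> \<theta>s)))
      \<longleftrightarrow>
      (\<exists>\<rho>Y :: real^'dy. \<exists>\<rho>0 :: real. \<forall>y \<in> space \<nu>Y.
         log_partition \<nu>X sX (\<theta>X + \<Theta>XY *v sY y) = ereal (sY y \<bullet> \<rho>Y + \<rho>0)))
     \<and>
     (\<forall>\<rho>Y \<rho>0. (\<forall>y \<in> space \<nu>Y.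
         log_partition \<nu>X sX (\<theta>X + \<Theta>XY *v sY y) = ereal (sY y \<bullet> \<rho>Y + \<rho>0))
       \<longrightarrow> (\<exists>c > 0. \<forall>y \<in> space \<nu>Y.
         harm_prior \<nu>X sX sY \<theta>X \<theta>Y \<Theta>XY \<psi>XY y = ennreal (c * exp (sY y \<bullet> (\<theta>Y + \<rho>Y)))))
     \<and>
     (\<forall>\<theta>s c. c > 0 \<and> (\<forall>y \<in> space \<nu>Y.
         harm_prior \<nu>X sX sY \<theta>X \<theta>Y \<Theta>XY \<psi>XY y = ennreal (c * exp (sY y \<bullet> \<theta>s)))
       \<longrightarrow> (\<exists>\<rho>0. \<forall>y \<in> space \<nu>Y.
         log_partition \<nu>X sX (\<theta>X + \<Theta>XY *v sY y) = ereal (sY y \<bullet> (\<theta>s - \<theta>Y) + \<rho>0)))"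
  (is "_ \<and> ?prior_params \<and> ?conjugation_params")
proof -
  note pointwise = harm_prior_eq_exp_family_iff[OF assms(1)]
  have ?prior_params
  proof (intro allI impI)
    fix \<rho>Y \<rho>0
    assume "\<forall>y \<in> space \<nu>Y. log_partition \<nu>X sX (\<theta>X + \<Theta>XY *v sY y) = ereal (sY y \<bullet> \<rho>Y + \<rho>0)"
    then show "\<exists>c > 0. \<forall>y \<in> space \<nu>Y.
        harm_prior \<nu>X sX sY \<theta>X \<theta>Y \<Theta>XY \<psi>XY y = ennreal (c * exp (sY y \<bullet> (\<theta>Y + \<rho>Y)))"
      by (intro exI[of _ "exp (\<rho>0 - \<psi>XY)"]) (simp add: pointwise)
  qed
  moreover have ?conjugation_params
    by (auto simp: pointwise)
  ultimately show ?thesis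
    by blast
qed

end
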